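(* Let $\mathrm{Lab}$ be a labelling system on a finite simplicial tree $T$. Then the union of the useful edges of $T$ (together with their endpoints) is connected, i.e. forms a subtree of $T$: every edge lying on the path in $T$ between two useful edges is useful.
   Context: A labelling system on a finite simplicial tree $T$ assigns to each vertex $v$ a subset $\mathrm{Lab}(v)\subset\{1,\dots,N\}$ such that (A) $\mathrm{Lab}(a)\cap\mathrm{Lab}(b)\subset\mathrm{Lab}(x)$ whenever $x$ is a vertex on the shortest path between vertices $a,b$, and (B) $\bigcup_v\mathrm{Lab}(v)=\{1,\dots,N\}$. Removing the open edge $e$ leaves two closed connected components $T^+(e)$, $T^-(e)$. The edge $e$ is useless if $\bigcup_{v\in T^+(e)}\mathrm{Lab}(v)$ or $\bigcup_{v\in T^-(e)}\mathrm{Lab}(v)$ equals $\{1,\dots,N\}$, and useful otherwise. *)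

theory Defs
  imports Main
begin

definition is_path :: "'v set set \<Rightarrow> 'v list \<Rightarrow> bool" where
  "is_path E xs \<longleftrightarrow> xs \<noteq> [] \<and> distinct xs \<and>
     (\<forall>i. Suc i < length xs \<longrightarrow> {xs ! i, xs ! Suc i} \<in> E)"

definition path_edges :: "'v list \<Rightarrow> 'v set set" where
  "path_edges xs = {{xs ! i, xs ! Suc i} | i. Suc i < length xs}"

definition simplicial_tree :: "'v set \<Rightarrow> 'v set set \<Rightarrow> bool" where
  "simplicial_tree V E \<longleftrightarrow> finite V \<and> V \<noteq> {} \<and>
     E \<subseteq> {{a, b} | a b. a \<in> V \<and> b \<in> V \<and> a \<noteq> b} \<and>
     (\<forall>a\<in>V. \<forall>b\<in>V. \<exists>!xs. is_path E xs \<and> hd xs = a \<and> last xs = b)"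

definition tpath :: "'v set set \<Rightarrow> 'v \<Rightarrow> 'v \<Rightarrow> 'v list" where
  "tpath E a b = (THE xs. is_path E xs \<and> hd xs = a \<and> last xs = b)"

definition labelling_system ::
  "'v set \<Rightarrow> 'v set set \<Rightarrow> nat \<Rightarrow> ('v \<Rightarrow> nat set) \<Rightarrow> bool" where
  "labelling_system V E N Lab \<longleftrightarrow>
     (\<forall>v\<in>V. Lab v \<subseteq> {1..N}) \<and>
     (\<forall>a\<in>V. \<forall>b\<in>V. \<forall>x\<in>set (tpath E a b). Lab a \<inter> Lab b \<subseteq> Lab x) \<and>
     (\<Union>v\<in>V. Lab v) = {1..N}"

text \<open>The closed component containing the endpoint u of e after removing the open edge e.\<close>

definition side :: "'v set \<Rightarrow> 'v set set \<Rightarrow> 'v set \<Rightarrow> 'v \<Rightarrow> 'v set" where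
  "side V E e u = {x \<in> V. \<exists>xs. is_path (E - {e}) xs \<and> hd xs = u \<and> last xs = x}"

definition useful ::
  "'v set \<Rightarrow> 'v set set \<Rightarrow> nat \<Rightarrow> ('v \<Rightarrow> nat set) \<Rightarrow> 'v set \<Rightarrow> bool" where
  "useful V E N Lab e \<longleftrightarrow> e \<in> E \<and>
     (\<forall>u\<in>e. (\<Union>x\<in>side V E e u. Lab x) \<noteq> {1..N})"

end

theory Submission
  imports Defs
begin

(* Let e = {x_i, x_(i+1)} be the i-th edge of the tree path from a \<in> e1 to
   b \<in> e2.  Removing e separates x_i from b (the path from x_i to b uses e, and tree paths
   are unique), and likewise x_(i+1) from a.  Now take an endpoint u of e and a useful edge f
   (namely e2, resp. e1) having an endpoint not reachable from u in T - e.  Then no vertex of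
   the side of e at u lies on f, so every path inside that side avoids f; since u is joined
   to f in T, the whole side of e at u lies inside the side of f at some endpoint p of f.
   If the labels of the former covered {1..N}, so would those of the latter, contradicting
   usefulness of f. *)

section \<open>Paths and reachability\<close>

definition adj :: "'v set set \<Rightarrow> ('v \<times> 'v) set" where
  "adj F = {(x, y). {x, y} \<in> F}"

lemma sym_reach: "(x, y) \<in> (adj F)\<^sup>* \<Longrightarrow> (y, x) \<in> (adj F)\<^sup>*"
proof -
  have "sym (adj F)" by (auto simp: adj_def sym_def insert_commute)
  then have "sym ((adj F)\<^sup>*)" by (rule sym_rtrancl)
  then show "(x, y) \<in> (adj F)\<^sup>* \<Longrightarrow> (y, x) \<in> (adj F)\<^sup>*" by (auto dest: symD)
qed

lemma reach_within_edge:
  assumes "{c, d} \<in> F" "y \<in> {c, d}" "z \<in> {c, d}"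
  shows "(y, z) \<in> (adj F)\<^sup>*"
  using assms by (auto simp: adj_def insert_commute)

lemma is_path_mono: "is_path F xs \<Longrightarrow> F \<subseteq> G \<Longrightarrow> is_path G xs"
  by (auto simp: is_path_def)

lemma is_path_take: "is_path F xs \<Longrightarrow> 0 < k \<Longrightarrow> is_path F (take k xs)"
  by (auto simp: is_path_def)

lemma is_path_drop: "is_path F xs \<Longrightarrow> k < length xs \<Longrightarrow> is_path F (drop k xs)"
  by (auto simp: is_path_def)

lemma path_reach:
  assumes "is_path F xs"
  shows "(hd xs, last xs) \<in> (adj F)\<^sup>*"
proof -
  have "(xs ! 0, xs ! k) \<in> (adj F)\<^sup>*" if "k < length xs" for k
    using that
  proof (induction k)
    case (Suc k)
    then have "(xs ! k, xs ! Suc k) \<in> adj F"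
      using assms by (auto simp: is_path_def adj_def)
    with Suc show ?case by (auto intro: rtrancl_into_rtrancl)
  qed simp
  moreover have "xs \<noteq> []" using assms by (simp add: is_path_def)
  ultimately show ?thesis by (simp add: hd_conv_nth last_conv_nth)
qed

text \<open>A path can be extended by an edge at its end (cutting it short if the new
  vertex is already on it).\<close>

lemma path_extend:
  assumes xs: "is_path F xs" and edge: "{last xs, z} \<in> F"
  shows "\<exists>ys. is_path F ys \<and> hd ys = hd xs \<and> last ys = z"
proof (cases "z \<in> set xs")
  case True
  then obtain k where k: "k < length xs" "xs ! k = z" by (auto simp: in_set_conv_nth)
  have "is_path F (take (Suc k) xs)" using xs by (rule is_path_take) simp
  moreover have "hd (take (Suc k) xs) = hd xs" using k by (simp add: hd_conv_nth)
  moreover have "last (take (Suc k) xs) = z" using k by (simp add: take_Suc_conv_app_nth)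
  ultimately show ?thesis by blast
next
  case False
  have ne: "xs \<noteq> []" using xs by (simp add: is_path_def)
  have "{(xs @ [z]) ! i, (xs @ [z]) ! Suc i} \<in> F" if i: "Suc i < length (xs @ [z])" for i
  proof (cases "Suc i < length xs")
    case True
    then show ?thesis using xs by (simp add: nth_append is_path_def)
  next
    case False
    then have "i = length xs - 1" using i by simp
    then show ?thesis using edge ne by (simp add: nth_append last_conv_nth)
  qed
  then have "is_path F (xs @ [z])" using xs False by (simp add: is_path_def)
  then show ?thesis using ne by (intro exI[of _ "xs @ [z]"]) simp
qed

lemma reach_path:
  assumes "(x, y) \<in> (adj F)\<^sup>*"
  shows "\<exists>xs. is_path F xs \<and> hd xs = x \<and> last xs = y"
  using assms
proof (induction rule: rtrancl_induct)
  case base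
  show ?case by (rule exI[of _ "[x]"]) (simp add: is_path_def)
next
  case (step y z)
  then obtain xs where "is_path F xs" "hd xs = x" "last xs = y" by blast
  with step(2) show ?case using path_extend[of F xs z] by (auto simp: adj_def)
qed

lemma side_eq: "side V E e u = {x \<in> V. (u, x) \<in> (adj (E - {e}))\<^sup>*}"
proof -
  have "(\<exists>xs. is_path (E - {e}) xs \<and> hd xs = u \<and> last xs = x) \<longleftrightarrow>
        (u, x) \<in> (adj (E - {e}))\<^sup>*" for x
    using path_reach reach_path by metis
  then show ?thesis unfolding side_def by blast
qed

lemma reach_remove_edge:
  assumes "(u, y) \<in> (adj F)\<^sup>*"
  shows "(u, y) \<in> (adj (F - {g}))\<^sup>* \<or> (\<exists>p\<in>g. (u, p) \<in> (adj (F - {g}))\<^sup>*)"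
  using assms
proof (induction rule: rtrancl_induct)
  case (step y z)
  show ?case
  proof (cases "{y, z} = g")
    case True
    then show ?thesis using step.IH by blast
  next
    case False
    then have "(y, z) \<in> adj (F - {g})" using step.hyps(2) by (simp add: adj_def)
    then show ?thesis using step.IH by (meson rtrancl_into_rtrancl)
  qed
qed simp

lemma reach_avoiding_edge:
  assumes avoid: "\<And>y. (u, y) \<in> (adj F)\<^sup>* \<Longrightarrow> y \<notin> g"
    and "(u, x) \<in> (adj F)\<^sup>*"
  shows "(u, x) \<in> (adj (F - {g}))\<^sup>*"
  using assms(2)
proof (induction rule: rtrancl_induct)
  case (step y z)
  then have "{y, z} \<noteq> g" using avoid by auto
  then have "(y, z) \<in> adj (F - {g})" using step.hyps(2) by (simp add: adj_def)
  then show ?case using step.IH by (rule rtrancl_into_rtrancl[rotated])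
qed simp

section \<open>Trees\<close>

lemma tree_edge:
  assumes "simplicial_tree V E" "f \<in> E"
  obtains c d where "f = {c, d}" "c \<in> V" "d \<in> V" "c \<noteq> d"
proof -
  have "f \<in> {{a, b} | a b. a \<in> V \<and> b \<in> V \<and> a \<noteq> b}"
    using assms by (auto simp: simplicial_tree_def)
  then show thesis using that by blast
qed

lemma tree_connected:
  assumes "simplicial_tree V E" "x \<in> V" "y \<in> V"
  shows "(x, y) \<in> (adj E)\<^sup>*"
proof -
  have "\<exists>!xs. is_path E xs \<and> hd xs = x \<and> last xs = y"
    using assms by (simp add: simplicial_tree_def)
  then obtain xs where "is_path E xs" "hd xs = x" "last xs = y" by (meson ex1_implies_ex)
  then show ?thesis using path_reach by fastforce
qed

lemma tpath_props:
  assumes "simplicial_tree V E" "a \<in> V" "b \<in> V"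
  shows "is_path E (tpath E a b) \<and> hd (tpath E a b) = a \<and> last (tpath E a b) = b"
  unfolding tpath_def by (rule theI') (use assms in \<open>simp add: simplicial_tree_def\<close>)

lemma path_vertices_in_V:
  assumes T: "simplicial_tree V E" and xs: "is_path E xs" and len: "2 \<le> length xs"
    and k: "k < length xs"
  shows "xs ! k \<in> V"
proof -
  obtain j where j: "Suc j < length xs" "k = j \<or> k = Suc j"
    using k len by (cases k) (auto intro: exI[of _ "k - 1"])
  then have "{xs ! j, xs ! Suc j} \<in> E" using xs by (simp add: is_path_def)
  then show ?thesis using j(2) by (elim tree_edge[OF T]) (auto simp: doubleton_eq_iff)
qed

text \<open>In a tree, a path cannot be bypassed: its endpoints are disconnected once any of
  its edges is removed, since a bypass would be a second path with the same ends.\<close>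

lemma tree_path_edge_not_bypassed:
  assumes T: "simplicial_tree V E" and ys: "is_path E ys" and j: "Suc j < length ys"
  shows "(hd ys, last ys) \<notin> (adj (E - {{ys ! j, ys ! Suc j}}))\<^sup>*"
proof
  let ?e = "{ys ! j, ys ! Suc j}"
  assume "(hd ys, last ys) \<in> (adj (E - {?e}))\<^sup>*"
  then obtain zs where zs: "is_path (E - {?e}) zs" "hd zs = hd ys" "last zs = last ys"
    by (blast dest: reach_path)
  have len: "2 \<le> length ys" and ne: "ys \<noteq> []" using j by auto
  have "hd ys \<in> V"
    using path_vertices_in_V[OF T ys len, of 0] len ne by (simp add: hd_conv_nth)
  moreover have "last ys \<in> V"
    using path_vertices_in_V[OF T ys len, of "length ys - 1"] len ne by (simp add: last_conv_nth)
  ultimately have "\<exists>!xs. is_path E xs \<and> hd xs = hd ys \<and> last xs = last ys"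
    using T by (simp add: simplicial_tree_def)
  moreover have "is_path E zs" using zs(1) by (rule is_path_mono) blast
  ultimately have "zs = ys" using ys zs(2,3) by blast
  then have "?e \<in> E - {?e}" using zs(1) j unfolding is_path_def by blast
  then show False by simp
qed

lemma tree_path_edge_separates:
  assumes T: "simplicial_tree V E" and xs: "is_path E xs" and i: "Suc i < length xs"
  defines "e \<equiv> {xs ! i, xs ! Suc i}"
  shows "(xs ! i, last xs) \<notin> (adj (E - {e}))\<^sup>*"
    and "(xs ! Suc i, hd xs) \<notin> (adj (E - {e}))\<^sup>*"
proof -
  let ?ys = "drop i xs"
  have "is_path E ?ys" using xs i by (rule is_path_drop[OF _ Suc_lessD])
  moreover have "Suc 0 < length ?ys" using i by simp
  ultimately have "(hd ?ys, last ?ys) \<notin> (adj (E - {{?ys ! 0, ?ys ! Suc 0}}))\<^sup>*"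
    by (rule tree_path_edge_not_bypassed[OF T])
  moreover have "hd ?ys = xs ! i" "last ?ys = last xs" "{?ys ! 0, ?ys ! Suc 0} = e"
    using i by (simp_all add: e_def hd_drop_conv_nth)
  ultimately show "(xs ! i, last xs) \<notin> (adj (E - {e}))\<^sup>*" by simp
next
  let ?ys = "take (Suc (Suc i)) xs"
  have "is_path E ?ys" using xs by (rule is_path_take) simp
  moreover have "Suc i < length ?ys" using i by simp
  ultimately have "(hd ?ys, last ?ys) \<notin> (adj (E - {{?ys ! i, ?ys ! Suc i}}))\<^sup>*"
    by (rule tree_path_edge_not_bypassed[OF T])
  moreover have "hd ?ys = hd xs" "{?ys ! i, ?ys ! Suc i} = e"
    using i by (simp_all add: e_def)
  moreover have "last ?ys = xs ! Suc i" using i by (simp add: take_Suc_conv_app_nth)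
  ultimately have "(hd xs, xs ! Suc i) \<notin> (adj (E - {e}))\<^sup>*" by simp
  then show "(xs ! Suc i, hd xs) \<notin> (adj (E - {e}))\<^sup>*" by (meson sym_reach)
qed

section \<open>Nested sides\<close>

lemma side_within_side:
  assumes T: "simplicial_tree V E" and eE: "e \<in> E" and fE: "f \<in> E" and ef: "e \<noteq> f"
    and u: "u \<in> e" and t: "t \<in> f" and sep: "(u, t) \<notin> (adj (E - {e}))\<^sup>*"
  shows "\<exists>p\<in>f. side V E e u \<subseteq> side V E f p"
proof -
  have avoid: "y \<notin> f" if "(u, y) \<in> (adj (E - {e}))\<^sup>*" for y
  proof
    assume "y \<in> f"
    obtain c d where cd: "f = {c, d}" using tree_edge[OF T fE] by metis
    have "{c, d} \<in> E - {e}" using fE ef cd by simp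
    then have "(y, t) \<in> (adj (E - {e}))\<^sup>*" using \<open>y \<in> f\<close> t cd by (simp add: reach_within_edge)
    with that sep show False by (meson rtrancl_trans)
  qed
  have "u \<in> V" "t \<in> V"
    using tree_edge[OF T eE] tree_edge[OF T fE] u t by blast+
  then have "(u, t) \<in> (adj E)\<^sup>*" by (rule tree_connected[OF T])
  then obtain p where p: "p \<in> f" "(u, p) \<in> (adj (E - {f}))\<^sup>*"
    using reach_remove_edge[of u t E f] t by blast
  have "side V E e u \<subseteq> side V E f p"
  proof
    fix x assume "x \<in> side V E e u"
    then have x: "x \<in> V" "(u, x) \<in> (adj (E - {e}))\<^sup>*" by (auto simp: side_eq)
    have "(u, x) \<in> (adj (E - {e} - {f}))\<^sup>*" using reach_avoiding_edge[OF avoid x(2)] .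
    then have "(u, x) \<in> (adj (E - {f}))\<^sup>*" by (rule rtrancl_mono[THEN subsetD, rotated]) (auto simp: adj_def)
    then have "(p, x) \<in> (adj (E - {f}))\<^sup>*" using sym_reach[OF p(2)] by (rule rtrancl_trans[rotated])
    then show "x \<in> side V E f p" using x(1) by (simp add: side_eq)
  qed
  then show ?thesis using p(1) by blast
qed

text \<open>Hence the side of e at u does not carry all labels, as the usefulness of f forbids
  this already for the larger side of f.\<close>

lemma side_not_full:
  assumes T: "simplicial_tree V E" and L: "labelling_system V E N Lab"
    and f: "useful V E N Lab f" and eE: "e \<in> E" and u: "u \<in> e"
    and t: "t \<in> f" and sep: "(u, t) \<notin> (adj (E - {e}))\<^sup>*"
  shows "(\<Union>x\<in>side V E e u. Lab x) \<noteq> {1..N}"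
proof (cases "e = f")
  case True
  then show ?thesis using f u by (simp add: useful_def)
next
  case False
  have fE: "f \<in> E" using f by (simp add: useful_def)
  obtain p where p: "p \<in> f" and sub: "side V E e u \<subseteq> side V E f p"
    using side_within_side[OF T eE fE False u t sep] by blast
  have "(\<Union>x\<in>side V E f p. Lab x) \<subseteq> {1..N}"
    using L unfolding labelling_system_def side_def by blast
  moreover have "(\<Union>x\<in>side V E f p. Lab x) \<noteq> {1..N}" using f p by (simp add: useful_def)
  ultimately show ?thesis using sub by blast
qed

theorem mainTheorem11:
  fixes V :: "'v set" and E :: "'v set set" and N :: nat and Lab :: "'v \<Rightarrow> nat set"
  assumes "simplicial_tree V E"
    and "labelling_system V E N Lab"
    and "useful V E N Lab e1" and "useful V E N Lab e2"
    and "a \<in> e1" and "b \<in> e2"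
    and "e \<in> path_edges (tpath E a b)"
  shows "useful V E N Lab e"
proof -
  note T = assms(1) and L = assms(2)
  define xs where "xs = tpath E a b"
  have "e1 \<in> E" "e2 \<in> E" using assms(3,4) by (simp_all add: useful_def)
  then have "a \<in> V" "b \<in> V"
    using tree_edge[OF T] assms(5,6) by blast+
  then have xs: "is_path E xs" "hd xs = a" "last xs = b"
    using tpath_props[OF T] by (simp_all add: xs_def)
  obtain i where i: "e = {xs ! i, xs ! Suc i}" "Suc i < length xs"
    using assms(7) by (auto simp: path_edges_def xs_def)
  have "e \<in> E" using xs(1) i by (simp add: is_path_def)
  moreover have "(\<Union>x\<in>side V E e u. Lab x) \<noteq> {1..N}" if u: "u \<in> e" for u
  proof -
    note sep = tree_path_edge_separates[OF T xs(1) i(2), folded i(1)]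
    consider "u = xs ! i" | "u = xs ! Suc i" using u i(1) by blast
    then show ?thesis
    proof cases
      case 1
      then show ?thesis using side_not_full[OF T L assms(4) \<open>e \<in> E\<close> u assms(6)] sep(1) xs(3) by simp
    next
      case 2
      then show ?thesis using side_not_full[OF T L assms(3) \<open>e \<in> E\<close> u assms(5)] sep(2) xs(2) by simp
    qed
  qed
  ultimately show ?thesis by (simp add: useful_def)
qed

end
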